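(* Let $\Sigma$ be a finite alphabet. For any $L \subseteq \Sigma^*$ and $n \ge 0$, the language $L_n = \{w \in \Sigma^* : \mathrm{last}_n(w) \in L\}$ is $(2^{F_L(n)+1}-1)$-suffix testable.
   Context: Fix $a\in\Sigma$; $\mathrm{last}_n(a_1\cdots a_m)=a_{m-n+1}\cdots a_m$ if $n\le m$, else $a^{n-m}a_1\cdots a_m$. A fixed-size sliding window algorithm for $L$ is a sequence $(\mathcal{A}_n)_{n\ge0}$ of deterministic (possibly infinite-state) automata with injective encodings of their states into bit strings, $\mathcal{A}_n$ accepting $L_n$; its space complexity at $n$ is the maximal encoding length of a state of $\mathcal{A}_n$. $F_L(n)$ is the minimal space complexity at $n$ over all such algorithms. A language $K$ is $k$-suffix testable if for all $x,y\in\Sigma^*$ and $z\in\Sigma^k$: $xz\in K\iff yz\in K$. *)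

theory Defs
  imports Main "HOL-Library.Extended_Nat"
begin

text \<open>The alphabet is a finite type 'a; a is the fixed padding letter.\<close>

definition last_n :: "'a \<Rightarrow> nat \<Rightarrow> 'a list \<Rightarrow> 'a list" where
  "last_n a n w = (if n \<le> length w then drop (length w - n) w
                   else replicate (n - length w) a @ w)"

definition window_lang :: "'a \<Rightarrow> 'a list set \<Rightarrow> nat \<Rightarrow> 'a list set" where
  "window_lang a L n = {w. last_n a n w \<in> L}"

text \<open>Since the encoding must be injective, the state set is
  countable; we take states to be of type bool list (an arbitrary countable type),
  keeping the encoding as a separate component.\<close>

record ('a, 's) dfa =
  states :: "'s set"
  init :: 's
  delta :: "'s \<Rightarrow> 'a \<Rightarrow> 's"
  final :: "'s set"
  enc :: "'s \<Rightarrow> bool list"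

definition wf_dfa :: "('a, 's) dfa \<Rightarrow> bool" where
  "wf_dfa A \<longleftrightarrow> init A \<in> states A
     \<and> (\<forall>q\<in>states A. \<forall>c. delta A q c \<in> states A)
     \<and> final A \<subseteq> states A
     \<and> inj_on (enc A) (states A)"

definition dfa_lang :: "('a, 's) dfa \<Rightarrow> 'a list set" where
  "dfa_lang A = {w. foldl (delta A) (init A) w \<in> final A}"

definition space :: "('a, 's) dfa \<Rightarrow> enat" where
  "space A = (SUP q \<in> states A. enat (length (enc A q)))"

text \<open>F_L(n): minimal space complexity at n over all sliding window algorithms;
  only the n-th automaton matters, so this is the minimum over automata accepting L_n.\<close>
definition F_L :: "'a \<Rightarrow> 'a list set \<Rightarrow> nat \<Rightarrow> enat" where
  "F_L a L n = (INF A \<in> {A :: ('a, bool list) dfa. wf_dfa A \<and> dfa_lang A = window_lang a L n}.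
                  space A)"

definition suffix_testable :: "nat \<Rightarrow> 'a list set \<Rightarrow> bool" where
  "suffix_testable k K \<longleftrightarrow>
     (\<forall>x y z. length z = k \<longrightarrow> (x @ z \<in> K \<longleftrightarrow> y @ z \<in> K))"

end

theory Submission
  imports Defs "HOL-Library.Countable"
begin

text \<open>Take an optimal automaton for \<open>L\<^sub>n\<close>, of space \<open>m = F\<^sub>L(n)\<close>; it exists and \<open>m\<close> is finite,
  because the automaton storing \<open>last\<^sub>n(w)\<close> in unary has finitely many states. Injectivity of the encoding
  bounds its number of states by the number \<open>2\<^sup>m\<^sup>+\<^sup>1 - 1\<close> of bit strings of length at most \<open>m\<close>.
  Call two states \<open>j\<close>-equivalent if no word of length at least \<open>j\<close> separates them. These
  equivalences increase with \<open>j\<close>, and \<open>j+1\<close>-equivalence is determined by \<open>j\<close>-equivalence of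
  the successors, so the chain becomes constant after at most as many steps as there are
  states. Since \<open>L\<^sub>n\<close> is \<open>n\<close>-suffix testable, any two reachable states are \<open>n\<close>-equivalent,
  hence equivalent for every \<open>j \<ge> 2\<^sup>m\<^sup>+\<^sup>1 - 1\<close>, which is the claimed suffix testability.\<close>

lemma last_n_conv_rev_take: "last_n a n w = rev (take n (rev w @ replicate n a))"
  unfolding last_n_def by (auto simp: take_rev min_def)

lemma length_last_n [simp]: "length (last_n a n w) = n"
  by (simp add: last_n_conv_rev_take)

lemma last_n_Nil: "last_n a n [] = replicate n a"
  by (simp add: last_n_conv_rev_take)

lemma last_n_last_n_snoc: "last_n a n (last_n a n w @ [c]) = last_n a n (w @ [c])"
  by (cases n) (simp_all add: last_n_conv_rev_take min_def)

lemma last_n_append_long: "n \<le> length z \<Longrightarrow> last_n a n (x @ z) = last_n a n z"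
  by (simp add: last_n_conv_rev_take)

lemma suffix_testable_mono:
  assumes "j \<le> k" "suffix_testable j K"
  shows "suffix_testable k K"
  unfolding suffix_testable_def
proof (intro allI impI)
  fix x y z :: "'a list" assume "length z = k"
  then obtain u v where "z = u @ v" "length v = j"
    using assms(1) by (metis append_take_drop_id diff_diff_cancel length_drop)
  then show "x @ z \<in> K \<longleftrightarrow> y @ z \<in> K"
    using assms(2) unfolding suffix_testable_def by (metis append.assoc)
qed

lemma suffix_testable_window_lang: "suffix_testable n (window_lang a L n)"
  unfolding suffix_testable_def window_lang_def by (metis last_n_append_long mem_Collect_eq order_refl)

lemma card_quotient_less:
  assumes "finite S" "equiv S E" "equiv S E'" "E \<subset> E'"
  shows "card (S // E') < card (S // E)"
proof -
  have classes: "E' `` (E `` {x}) = E' `` {x}" if "x \<in> S" for x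
  proof
    show "E' `` (E `` {x}) \<subseteq> E' `` {x}"
      using assms(3,4) unfolding equiv_def trans_def by blast
    show "E' `` {x} \<subseteq> E' `` (E `` {x})"
      using assms(2) that unfolding equiv_def refl_on_def by blast
  qed
  have quot: "S // E' = (\<lambda>X. E' `` X) ` (S // E)"
    unfolding quotient_def using classes by auto
  obtain p q where pq: "(p, q) \<in> E'" "(p, q) \<notin> E" using assms(4) by auto
  then have "p \<in> S" "q \<in> S" using assms(3) unfolding equiv_def refl_on_def by auto
  with pq have "E `` {p} \<noteq> E `` {q}" "E' `` (E `` {p}) = E' `` (E `` {q})"
    using eq_equiv_class_iff assms(2,3) classes by metis+
  with \<open>p \<in> S\<close> \<open>q \<in> S\<close> have "\<not> inj_on (\<lambda>X. E' `` X) (S // E)"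
    unfolding inj_on_def quotient_def by blast
  moreover have "finite (S // E)"
    using finite_quotient assms(1,2) unfolding equiv_def refl_on_def by blast
  ultimately show ?thesis
    unfolding quot by (metis card_image_le inj_on_iff_eq_card order_le_imp_less_or_eq)
qed

lemma equiv_chain_stabilizes:
  fixes E :: "nat \<Rightarrow> ('s \<times> 's) set"
  assumes "finite S" and equiv: "\<And>j. equiv S (E j)" and mono: "\<And>j. E j \<subseteq> E (Suc j)"
  shows "\<exists>i \<le> card S. E i = E (Suc i)"
proof (rule ccontr)
  assume unstable: "\<not> ?thesis"
  have "card (S // E j) + j \<le> card S" if "j \<le> card S" for j
    using that
  proof (induction j)
    case 0
    show ?case
      unfolding quotient_def by (metis UNION_singleton_eq_range card_image_le \<open>finite S\<close> add_0_right)
  next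
    case (Suc j)
    with unstable mono have "E j \<subset> E (Suc j)" by (meson Suc_leD psubsetI)
    then have "card (S // E (Suc j)) < card (S // E j)"
      by (rule card_quotient_less[OF \<open>finite S\<close> equiv equiv])
    moreover have "card (S // E j) + j \<le> card S" using Suc by simp
    ultimately show ?case by simp
  qed
  from this[of "card S"] have "card (S // E (card S)) = 0" by simp
  moreover have "finite (S // E (card S))"
    using finite_quotient[OF \<open>finite S\<close>] equiv unfolding equiv_def refl_on_def by blast
  ultimately have "S = {}" by (simp add: quotient_is_empty)
  then have "E 0 = E (Suc 0)" using equiv[of 0] equiv[of 1] unfolding equiv_def refl_on_def by auto
  then show False using unstable by blast
qed

definition equiv_beyond :: "('a, 's) dfa \<Rightarrow> nat \<Rightarrow> ('s \<times> 's) set" where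
  "equiv_beyond A j = {(p, q). p \<in> states A \<and> q \<in> states A \<and>
     (\<forall>w. j \<le> length w \<longrightarrow> (foldl (delta A) p w \<in> final A \<longleftrightarrow> foldl (delta A) q w \<in> final A))}"

lemma foldl_delta_in_states: "wf_dfa A \<Longrightarrow> p \<in> states A \<Longrightarrow> foldl (delta A) p w \<in> states A"
  by (induction w arbitrary: p) (auto simp: wf_dfa_def)

lemma foldl_init_in_states: "wf_dfa A \<Longrightarrow> foldl (delta A) (init A) w \<in> states A"
  by (simp add: foldl_delta_in_states wf_dfa_def)

lemma equiv_equiv_beyond: "equiv (states A) (equiv_beyond A j)"
  unfolding equiv_def refl_on_def sym_def trans_def equiv_beyond_def by auto

lemma equiv_beyond_mono: "j \<le> k \<Longrightarrow> equiv_beyond A j \<subseteq> equiv_beyond A k"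
  unfolding equiv_beyond_def by auto

lemma equiv_beyond_Suc:
  assumes "wf_dfa A"
  shows "equiv_beyond A (Suc j) =
    {(p, q). p \<in> states A \<and> q \<in> states A \<and> (\<forall>c. (delta A p c, delta A q c) \<in> equiv_beyond A j)}"
proof -
  have long_words: "(\<forall>w. Suc j \<le> length w \<longrightarrow> P w) \<longleftrightarrow> (\<forall>c w. j \<le> length w \<longrightarrow> P (c # w))" for P
    by (metis Suc_le_length_iff Suc_le_mono length_Cons)
  have "(\<forall>w. Suc j \<le> length w \<longrightarrow> (foldl (delta A) p w \<in> final A \<longleftrightarrow> foldl (delta A) q w \<in> final A))
    \<longleftrightarrow> (\<forall>c w. j \<le> length w \<longrightarrow>
        (foldl (delta A) (delta A p c) w \<in> final A \<longleftrightarrow> foldl (delta A) (delta A q c) w \<in> final A))"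
    for p q using long_words[of "\<lambda>w. foldl (delta A) p w \<in> final A \<longleftrightarrow> foldl (delta A) q w \<in> final A"]
    by simp
  then show ?thesis
    using assms unfolding equiv_beyond_def wf_dfa_def by blast
qed

lemma equiv_beyond_stable:
  assumes "wf_dfa A" "equiv_beyond A i = equiv_beyond A (Suc i)" "i \<le> j"
  shows "equiv_beyond A j = equiv_beyond A i"
  using assms(3)
proof (induction rule: dec_induct)
  case (step j)
  then have "equiv_beyond A (Suc j) = equiv_beyond A (Suc i)"
    by (simp add: equiv_beyond_Suc[OF assms(1)])
  with assms(2) show ?case by simp
qed simp

lemma equiv_beyond_subset_card:
  assumes "wf_dfa A" "finite (states A)" "card (states A) \<le> k"
  shows "equiv_beyond A j \<subseteq> equiv_beyond A k"
proof -
  obtain i where "i \<le> card (states A)" and stable: "equiv_beyond A i = equiv_beyond A (Suc i)"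
    using equiv_chain_stabilizes[where E = "equiv_beyond A", OF assms(2) equiv_equiv_beyond
        equiv_beyond_mono[OF le_SucI[OF order_refl]]] by blast
  with assms(3) have "equiv_beyond A (max j k) = equiv_beyond A k"
    using equiv_beyond_stable[OF assms(1) stable] by (metis le_trans max.cobounded2)
  then show ?thesis using equiv_beyond_mono[of j "max j k" A] by simp
qed

lemma dfa_lang_append_iff:
  "x @ z \<in> dfa_lang A \<longleftrightarrow> foldl (delta A) (foldl (delta A) (init A) x) z \<in> final A"
  by (simp add: dfa_lang_def)

lemma suffix_testable_dfa_lang_iff:
  assumes "wf_dfa A"
  shows "suffix_testable j (dfa_lang A) \<longleftrightarrow>
    (\<forall>x y. (foldl (delta A) (init A) x, foldl (delta A) (init A) y) \<in> equiv_beyond A j)"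
proof
  assume testable: "suffix_testable j (dfa_lang A)"
  show "\<forall>x y. (foldl (delta A) (init A) x, foldl (delta A) (init A) y) \<in> equiv_beyond A j"
  proof (intro allI)
    fix x y :: "'a list"
    have "foldl (delta A) (foldl (delta A) (init A) x) w \<in> final A \<longleftrightarrow>
        foldl (delta A) (foldl (delta A) (init A) y) w \<in> final A" if "j \<le> length w" for w
      using suffix_testable_mono[OF that testable]
      unfolding suffix_testable_def dfa_lang_append_iff by blast
    moreover have "foldl (delta A) (init A) x \<in> states A" "foldl (delta A) (init A) y \<in> states A"
      using assms by (simp_all add: foldl_init_in_states)
    ultimately show "(foldl (delta A) (init A) x, foldl (delta A) (init A) y) \<in> equiv_beyond A j"
      unfolding equiv_beyond_def by blast
  qed
qed (simp add: suffix_testable_def equiv_beyond_def dfa_lang_append_iff)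

lemma suffix_testable_dfa_lang_card:
  assumes "wf_dfa A" "finite (states A)" "card (states A) \<le> k" "suffix_testable j (dfa_lang A)"
  shows "suffix_testable k (dfa_lang A)"
  using assms(4) equiv_beyond_subset_card[OF assms(1-3)]
  unfolding suffix_testable_dfa_lang_iff[OF assms(1)] by blast

lemma card_bool_lists_length_le: "card {xs :: bool list. length xs \<le> m} = 2 ^ (m + 1) - 1"
proof -
  have "(\<Sum>i\<le>m. (2::nat) ^ i) = 2 ^ (m + 1) - 1" by (induction m) auto
  then show ?thesis using card_lists_length_le[of "UNIV :: bool set" m] by simp
qed

lemma finite_bool_lists_length_le: "finite {xs :: bool list. length xs \<le> m}"
  using finite_lists_length_le[of "UNIV :: bool set" m] by simp

lemma card_states_le_space:
  assumes "wf_dfa A" "space A = enat m"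
  shows "finite (states A)" "card (states A) \<le> 2 ^ (m + 1) - 1"
proof -
  have "enat (length (enc A q)) \<le> enat m" if "q \<in> states A" for q
    using assms(2) that unfolding space_def by (metis SUP_upper)
  then have sub: "enc A ` states A \<subseteq> {xs. length xs \<le> m}" by auto
  have inj: "inj_on (enc A) (states A)" using assms(1) by (simp add: wf_dfa_def)
  show "finite (states A)"
    using finite_subset[OF sub finite_bool_lists_length_le] finite_image_iff[OF inj] by blast
  show "card (states A) \<le> 2 ^ (m + 1) - 1"
    using card_mono[OF finite_bool_lists_length_le sub] card_image[OF inj]
    by (simp add: card_bool_lists_length_le)
qed

definition unary_code :: "'a::countable \<Rightarrow> bool list" where
  "unary_code x = replicate (to_nat x) True"

lemma inj_unary_code: "inj unary_code"
  by (rule injI) (simp add: unary_code_def)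

definition window_dfa :: "'a::countable \<Rightarrow> 'a list set \<Rightarrow> nat \<Rightarrow> ('a, bool list) dfa" where
  "window_dfa a L n =
     \<lparr>states = unary_code ` {w :: 'a list. length w = n},
      init = unary_code (replicate n a),
      delta = (\<lambda>q c. unary_code (last_n a n (inv unary_code q @ [c]))),
      final = unary_code ` {w \<in> L. length w = n},
      enc = id\<rparr>"

lemma foldl_window_dfa:
  "foldl (delta (window_dfa a L n)) (init (window_dfa a L n)) w = unary_code (last_n a n w)"
  by (induction w rule: rev_induct)
    (simp_all add: window_dfa_def last_n_Nil inv_f_f[OF inj_unary_code] last_n_last_n_snoc)

lemma wf_window_dfa: "wf_dfa (window_dfa a L n)"
  unfolding wf_dfa_def window_dfa_def by auto

lemma dfa_lang_window_dfa: "dfa_lang (window_dfa a L n) = window_lang a L n"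
  unfolding dfa_lang_def window_lang_def foldl_window_dfa
  by (auto simp: window_dfa_def inj_image_mem_iff[OF inj_unary_code])

lemma space_not_infinity:
  assumes "finite (states A)"
  shows "space A \<noteq> \<infinity>"
proof -
  have "space A \<le> enat (Max ((\<lambda>q. length (enc A q)) ` states A))"
    unfolding space_def using assms by (intro SUP_least) auto
  then show ?thesis by (cases "space A") auto
qed

lemma finite_states_window_dfa:
  fixes a :: "'a::finite"
  shows "finite (states (window_dfa a L n))"
  using finite_lists_length_eq[of "UNIV :: 'a set" n] by (simp add: window_dfa_def)

lemma F_L_attained:
  fixes a :: "'a::finite"
  obtains A :: "('a, bool list) dfa" and m
  where "wf_dfa A" "dfa_lang A = window_lang a L n" "space A = enat m" "F_L a L n = enat m"
proof -
  let ?X = "{A :: ('a, bool list) dfa. wf_dfa A \<and> dfa_lang A = window_lang a L n}"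
  have "window_dfa a L n \<in> ?X" using wf_window_dfa dfa_lang_window_dfa by blast
  then have "Inf (space ` ?X) \<in> space ` ?X" and le: "Inf (space ` ?X) \<le> space (window_dfa a L n)"
    unfolding Inf_enat_def by (auto intro: LeastI Least_le)
  then obtain A where A: "A \<in> ?X" "F_L a L n = space A"
    unfolding F_L_def by auto
  have "space (window_dfa a L n) \<noteq> \<infinity>"
    using finite_states_window_dfa by (rule space_not_infinity)
  with le A(2) obtain m where "space A = enat m"
    unfolding F_L_def by (cases "space A") auto
  with A show ?thesis by (intro that) auto
qed

theorem theorem6p3:
  fixes a :: "'a::finite" and L :: "'a list set" and n :: nat
  shows "\<exists>m. F_L a L n = enat m \<and> suffix_testable (2 ^ (m + 1) - 1) (window_lang a L n)"
proof -
  obtain A :: "('a, bool list) dfa" and m where A: "wf_dfa A" "dfa_lang A = window_lang a L n"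
    and m: "space A = enat m" "F_L a L n = enat m"
    by (rule F_L_attained)
  have "suffix_testable n (dfa_lang A)"
    unfolding A(2) by (rule suffix_testable_window_lang)
  then have "suffix_testable (2 ^ (m + 1) - 1) (dfa_lang A)"
    by (rule suffix_testable_dfa_lang_card[OF A(1) card_states_le_space[OF A(1) m(1)]])
  with A(2) m(2) show ?thesis by auto
qed

end
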